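(* Let $\mathbf{F}=(F_1,\ldots,F_d)$ be a vector of $d$ pairwise distinct (non-isomorphic) finite simple graphs with no isolated vertices, and let $n_0\ge\max\{|F_1|,\ldots,|F_d|\}$. Then there is a constant $V_\mathbf{F}>0$ such that the $d$-dimensional volume of $P_{\mathbf{F};n}$ is larger than $V_\mathbf{F}$ for every $n\ge n_0$.
   Context: $|H|$ is the number of vertices of a graph $H$. For graphs $F,G$, $t^L(F,G)$ is the number of subgraphs of $G$ (not necessarily induced) isomorphic to $F$, and $t(F,G)=t^L(F,G)/t^L(F,K_{|G|})$ if $|F|\le|G|$ and $t(F,G)=0$ otherwise, where $K_N$ is the complete graph on $N$ vertices. Write $t(\mathbf{F},G)=(t(F_1,G),\ldots,t(F_d,G))$. The polytope from subgraph statistics is $P_{\mathbf{F};n}=\mathrm{conv}\{t(\mathbf{F},G)\mid G\text{ a graph on } n \text{ vertices}\}\subseteq\mathbb{R}^d$. *)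

theory Defs
  imports "HOL-Analysis.Analysis"
begin

text \<open>A finite simple graph on the vertex set {0..<k} is a pair (k, E) where E is a set
  of 2-element subsets of {0..<k}. |H| = fst H.\<close>

type_synonym graph = "nat \<times> nat set set"

definition simple_graph :: "graph \<Rightarrow> bool" where
  "simple_graph H \<longleftrightarrow> (\<forall>e\<in>snd H. \<exists>u v. u \<noteq> v \<and> u < fst H \<and> v < fst H \<and> e = {u, v})"

definition no_isolated :: "graph \<Rightarrow> bool" where
  "no_isolated H \<longleftrightarrow> (\<forall>v < fst H. \<exists>e\<in>snd H. v \<in> e)"

definition graph_iso :: "graph \<Rightarrow> graph \<Rightarrow> bool" where
  "graph_iso F H \<longleftrightarrow> (\<exists>f. bij_betw f {0..<fst F} {0..<fst H} \<and> (\<lambda>e. f ` e) ` snd F = snd H)"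

definition complete_graph :: "nat \<Rightarrow> graph" where
  "complete_graph N = (N, {{u, v} | u v. u < N \<and> v < N \<and> u \<noteq> v})"

definition tL :: "graph \<Rightarrow> graph \<Rightarrow> nat" where
  "tL F G = card {(V', E'). V' \<subseteq> {0..<fst G} \<and> E' \<subseteq> snd G \<and>
      (\<exists>f. bij_betw f {0..<fst F} V' \<and> (\<lambda>e. f ` e) ` snd F = E')}"

definition tdens :: "graph \<Rightarrow> graph \<Rightarrow> real" where
  "tdens F G = (if fst F \<le> fst G then real (tL F G) / real (tL F (complete_graph (fst G))) else 0)"

definition tvec :: "('d \<Rightarrow> graph) \<Rightarrow> graph \<Rightarrow> real ^ 'd" where
  "tvec F G = (\<chi> i. tdens (F i) G)"

definition subgraph_polytope :: "('d \<Rightarrow> graph) \<Rightarrow> nat \<Rightarrow> (real ^ 'd) set" where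
  "subgraph_polytope F n = convex hull {tvec F G | G. simple_graph G \<and> fst G = n}"

end

theory Submission
  imports Defs
begin

text \<open>For T a set of vertices of F_j, let h(j, T) be the vector of homomorphism counts
  (hom(F_i, F_j[T]))_i. Since the F_i are pairwise non-isomorphic, Moebius inversion over vertex
  subsets shows that these vectors span R^d, and T = {} gives 0, so their convex hull has
  interior points; the same holds for injective homomorphism counts. For each n \<ge> n0 the
  density vector of F_j[T] padded to n vertices is the injective count vector rescaled
  coordinatewise, so P_{F;n} has positive volume. As n grows, the density vectors of the
  blow-ups of F_j[T] with blocks of size n div n0 converge to h(j, T) rescaled by n0^-|F_i|, so a
  fixed ball lies in P_{F;n} for all large n; the finitely many remaining n have positive
  volume.\<close>

section \<open>Convex geometry\<close>

lemma interior_convex_hull_nonempty: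
  fixes S :: "'a::euclidean_space set"
  assumes "0 \<in> S" "span S = UNIV"
  shows "interior (convex hull S) \<noteq> {}"
proof -
  have "affine hull S = UNIV"
    using affine_hull_span_0[OF hull_inc[OF assms(1)]] assms(2) by simp
  hence "affine hull (convex hull S) = UNIV" by (simp only: affine_hull_convex_hull)
  hence "rel_interior (convex hull S) = interior (convex hull S)" by (rule rel_interior_interior)
  moreover have "convex hull S \<noteq> {}" using hull_inc[OF assms(1), of convex] by blast
  hence "rel_interior (convex hull S) \<noteq> {}"
    using rel_interior_eq_empty[OF convex_convex_hull[of S]] by blast
  ultimately show ?thesis by simp
qed

lemma measure_ball_le_compact:
  fixes P :: "'a::euclidean_space set"
  assumes "ball x e \<subseteq> P" "compact P"
  shows "measure lborel (ball x e) \<le> measure lborel P"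
  using assms by (intro measure_mono_fmeasurable fmeasurable_compact) auto

lemma measure_pos_if_interior_nonempty:
  fixes P :: "'a::euclidean_space set"
  assumes "interior P \<noteq> {}" "compact P"
  shows "measure lborel P > 0"
proof -
  obtain x e where "e > 0" "ball x e \<subseteq> P"
    using assms(1) open_contains_ball[of "interior P"] interior_subset by blast
  thus ?thesis
    using content_ball_pos measure_ball_le_compact[OF _ assms(2)] by (metis order_less_le_trans)
qed

text \<open>Moving every point of a finite configuration by less than r keeps a ball of radius r inside
  the hull: a point of the small ball outside the new hull would be separated from it by a
  hyperplane, and shifting it by r towards that side gives a point of the large ball outside the
  old hull.\<close>

lemma ball_subset_convex_hull_perturbed:
  fixes c c' :: "'i \<Rightarrow> 'a::euclidean_space"
  assumes fin: "finite I" and r: "r > 0" and B: "ball z (2*r) \<subseteq> convex hull (c ` I)"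
    and close: "\<And>i. i \<in> I \<Longrightarrow> dist (c' i) (c i) < r"
  shows "ball z r \<subseteq> convex hull (c' ` I)"
proof
  fix y assume y: "y \<in> ball z r"
  show "y \<in> convex hull (c' ` I)"
  proof (rule ccontr)
    assume ny: "y \<notin> convex hull (c' ` I)"
    have "closed (convex hull (c' ` I))"
      using fin by (intro compact_imp_closed compact_convex_hull finite_imp_compact) simp
    then obtain a b where ab: "inner a y < b" "\<forall>x\<in>convex hull (c' ` I). b < inner a x"
      using separating_hyperplane_closed_point[OF convex_convex_hull _ ny] by blast
    have c'_in: "c' i \<in> convex hull (c' ` I)" if "i \<in> I" for i
      using that hull_subset[of "c' ` I" convex] by blast
    have "z \<in> convex hull (c ` I)" using B r by auto
    then obtain i0 where "i0 \<in> I" by fastforce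
    hence "a \<noteq> 0" using ab c'_in by force
    hence na: "norm a > 0" by simp
    define w where "w = y - (r / norm a) *\<^sub>R a"
    have "dist z w \<le> dist z y + dist y w" by (rule dist_triangle)
    moreover have "dist y w = r" using na r by (simp add: w_def dist_norm)
    ultimately have "dist z w < 2 * r" using y by simp
    hence w: "w \<in> convex hull (c ` I)" using B by auto
    have "c ` I \<subseteq> {x. inner a x > b - r * norm a}"
    proof
      fix x assume "x \<in> c ` I"
      then obtain i where i: "i \<in> I" "x = c i" by blast
      have "\<bar>inner a (c i - c' i)\<bar> \<le> norm a * norm (c i - c' i)"
        by (rule Cauchy_Schwarz_ineq2)
      moreover have "norm a * norm (c i - c' i) \<le> norm a * r"
        using close[OF i(1)] na by (simp add: dist_norm norm_minus_commute)
      moreover have "inner a (c i) = inner a (c' i) + inner a (c i - c' i)"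
        by (simp add: inner_diff_right)
      ultimately have "inner a (c i) > b - r * norm a"
        using ab(2) c'_in[OF i(1)] by (auto simp: mult.commute)
      thus "x \<in> {x. inner a x > b - r * norm a}" using i(2) by simp
    qed
    hence "convex hull (c ` I) \<subseteq> {x. inner a x > b - r * norm a}"
      by (rule hull_minimal) (rule convex_halfspace_gt)
    hence "inner a w > b - r * norm a" using w by blast
    moreover have "inner a w = inner a y - r * norm a"
      using na by (simp add: w_def inner_diff_right power2_norm_eq_inner[symmetric] power2_eq_square)
    ultimately show False using ab(1) by simp
  qed
qed

section \<open>Homomorphism counts are linearly independent\<close>

lemma simple_graph_edge_subset: "simple_graph H \<Longrightarrow> e \<in> snd H \<Longrightarrow> e \<subseteq> {0..<fst H}"
  unfolding simple_graph_def by fastforce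

lemma simple_graph_finite_edges: "simple_graph H \<Longrightarrow> finite (snd H)"
  by (rule finite_subset[of _ "Pow {0..<fst H}"]) (auto dest: simple_graph_edge_subset)

lemma inj_on_image_edges:
  "simple_graph F \<Longrightarrow> inj_on f {0..<fst F} \<Longrightarrow> inj_on (\<lambda>e. f ` e) (snd F)"
  by (rule inj_onI) (metis inj_on_image_eq_iff simple_graph_edge_subset)

text \<open>Homomorphisms from F into the graph with vertices T and edges E; the flag restricts to
  injective ones. Maps are extensional, so these sets are finite.\<close>

definition homs :: "bool \<Rightarrow> graph \<Rightarrow> nat set set \<Rightarrow> nat set \<Rightarrow> (nat \<Rightarrow> nat) set" where
  "homs injective F E T = {f \<in> {0..<fst F} \<rightarrow>\<^sub>E T.
      (injective \<longrightarrow> inj_on f {0..<fst F}) \<and> (\<forall>e\<in>snd F. f ` e \<in> E)}"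

definition onto_homs :: "bool \<Rightarrow> graph \<Rightarrow> nat set set \<Rightarrow> nat set \<Rightarrow> (nat \<Rightarrow> nat) set" where
  "onto_homs injective F E U = {f \<in> homs injective F E U. f ` {0..<fst F} = U}"

lemma finite_homs: "finite T \<Longrightarrow> finite (homs injective F E T)"
  unfolding homs_def by (rule finite_subset[of _ "{0..<fst F} \<rightarrow>\<^sub>E T"]) (auto intro: finite_PiE)

lemma finite_onto_homs: "finite U \<Longrightarrow> finite (onto_homs injective F E U)"
  unfolding onto_homs_def by (rule finite_subset[OF _ finite_homs]) auto

lemma card_homs_eq_sum_onto_homs:
  assumes "finite T"
  shows "card (homs injective F E T) = (\<Sum>U\<in>Pow T. card (onto_homs injective F E U))"
proof -
  have "homs injective F E T = (\<Union>U\<in>Pow T. onto_homs injective F E U)"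
    unfolding onto_homs_def homs_def by (auto simp: PiE_iff)
  moreover have "finite (onto_homs injective F E U)" if "U \<in> Pow T" for U
    using assms that by (meson PowD finite_onto_homs finite_subset)
  hence "card (\<Union>U\<in>Pow T. onto_homs injective F E U)
      = (\<Sum>U\<in>Pow T. card (onto_homs injective F E U))"
    using assms by (intro card_UN_disjoint) (auto simp: onto_homs_def)
  ultimately show ?thesis by simp
qed

lemma onto_hom_imp_le:
  assumes "f \<in> onto_homs injective F E {0..<K}"
  shows "K \<le> fst F"
proof -
  have "K = card (f ` {0..<fst F})" using assms unfolding onto_homs_def by simp
  also have "\<dots> \<le> fst F" using card_image_le[of "{0..<fst F}" f] by simp
  finally show ?thesis .
qed

lemma onto_hom_imp_graph_iso:
  assumes sF: "simple_graph F" and sH: "simple_graph H"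
    and f: "f \<in> onto_homs injective F (snd H) {0..<fst H}"
    and le: "fst F \<le> fst H" and edges: "card (snd H) \<le> card (snd F)"
  shows "graph_iso F H"
proof -
  have fim: "f ` {0..<fst F} = {0..<fst H}" and sub: "(\<lambda>e. f ` e) ` snd F \<subseteq> snd H"
    using f unfolding onto_homs_def homs_def by blast+
  have "fst F = fst H" using onto_hom_imp_le[OF f] le by simp
  hence "card (f ` {0..<fst F}) = card {0..<fst F}" using fim by simp
  hence inj: "inj_on f {0..<fst F}" by (rule eq_card_imp_inj_on[rotated]) simp
  have finH: "finite (snd H)" by (rule simple_graph_finite_edges[OF sH])
  have "card ((\<lambda>e. f ` e) ` snd F) = card (snd F)"
    by (rule card_image[OF inj_on_image_edges[OF sF inj]])
  with card_mono[OF finH sub] edges have "card ((\<lambda>e. f ` e) ` snd F) = card (snd H)" by linarith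
  hence "(\<lambda>e. f ` e) ` snd F = snd H" by (rule card_subset_eq[OF finH sub])
  thus ?thesis unfolding graph_iso_def bij_betw_def using inj fim by blast
qed

lemma onto_homs_empty_if_not_iso:
  assumes "simple_graph F" "simple_graph H" "\<not> graph_iso F H" "fst F \<le> fst H"
    and "fst F = fst H \<Longrightarrow> card (snd H) \<le> card (snd F)"
  shows "onto_homs injective F (snd H) {0..<fst H} = {}"
proof (rule equals0I)
  fix f assume f: "f \<in> onto_homs injective F (snd H) {0..<fst H}"
  hence "fst F = fst H" using onto_hom_imp_le assms(4) by (simp add: le_antisym)
  thus False using onto_hom_imp_graph_iso[OF assms(1,2) f] assms by simp
qed

lemma restrict_id_in_onto_homs:
  assumes "simple_graph F"
  shows "restrict id {0..<fst F} \<in> onto_homs injective F (snd F) {0..<fst F}"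
proof -
  have "restrict id {0..<fst F} ` e = e" if "e \<in> snd F" for e
    using simple_graph_edge_subset[OF assms that] by auto
  thus ?thesis unfolding onto_homs_def homs_def by (auto simp: inj_on_def)
qed

lemma sum_Pow_eq_zero_imp_eq_zero:
  fixes g :: "'a set \<Rightarrow> real"
  assumes "finite A" and sums: "\<And>T. T \<subseteq> A \<Longrightarrow> (\<Sum>U\<in>Pow T. g U) = 0"
  shows "U \<subseteq> A \<Longrightarrow> g U = 0"
proof (induction "card U" arbitrary: U rule: less_induct)
  case less
  have finU: "finite U" using less.prems assms(1) finite_subset by blast
  have "(\<Sum>U'\<in>Pow U. g U') = g U + (\<Sum>U'\<in>Pow U - {U}. g U')"
    by (rule sum.remove) (use finU in auto)
  moreover have "(\<Sum>U'\<in>Pow U - {U}. g U') = 0"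
  proof (rule sum.neutral, rule ballI)
    fix U' assume U': "U' \<in> Pow U - {U}"
    hence "card U' < card U" using finU by (intro psubset_card_mono) auto
    moreover have "U' \<subseteq> A" using U' less.prems by blast
    ultimately show "g U' = 0" using less.hyps by blast
  qed
  ultimately show ?case using sums[OF less.prems] by simp
qed

lemma sum_onto_hom_counts_eq_zero:
  fixes F :: "'d::finite \<Rightarrow> graph" and \<gamma> :: "'d \<Rightarrow> real"
  assumes vanish: "\<And>T. T \<subseteq> {0..<fst H} \<Longrightarrow>
      (\<Sum>i\<in>UNIV. \<gamma> i * real (card (homs injective (F i) (snd H) T))) = 0"
  shows "(\<Sum>i\<in>UNIV. \<gamma> i * real (card (onto_homs injective (F i) (snd H) {0..<fst H}))) = 0"
proof -
  define g where "g U = (\<Sum>i\<in>UNIV. \<gamma> i * real (card (onto_homs injective (F i) (snd H) U)))"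
    for U
  have "(\<Sum>U\<in>Pow T. g U) = 0" if T: "T \<subseteq> {0..<fst H}" for T
  proof -
    have "finite T" using T by (rule finite_subset) simp
    have "(\<Sum>U\<in>Pow T. g U)
        = (\<Sum>i\<in>UNIV. \<gamma> i * (\<Sum>U\<in>Pow T. real (card (onto_homs injective (F i) (snd H) U))))"
      unfolding g_def sum_distrib_left by (rule sum.swap)
    also have "\<dots> = (\<Sum>i\<in>UNIV. \<gamma> i * real (card (homs injective (F i) (snd H) T)))"
      using card_homs_eq_sum_onto_homs[OF \<open>finite T\<close>] by simp
    also have "\<dots> = 0" using vanish[OF T] .
    finally show ?thesis .
  qed
  hence "g {0..<fst H} = 0" by (intro sum_Pow_eq_zero_imp_eq_zero[of "{0..<fst H}" g]) auto
  thus ?thesis unfolding g_def .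
qed

text \<open>Given a vanishing combination, take among the F_i with nonzero coefficient one with the
  most vertices and, among those, the fewest edges. By Moebius inversion over the subsets of its
  vertex set, the coefficient-weighted count of homomorphisms onto it also vanishes; but only F_i
  itself has such homomorphisms.\<close>

lemma hom_counts_linearly_independent:
  fixes F :: "'d::finite \<Rightarrow> graph" and \<gamma> :: "'d \<Rightarrow> real"
  assumes graphs: "\<And>i. simple_graph (F i)"
    and distinct: "\<And>i j. i \<noteq> j \<Longrightarrow> \<not> graph_iso (F i) (F j)"
    and vanish: "\<And>j T. T \<subseteq> {0..<fst (F j)} \<Longrightarrow>
              (\<Sum>i\<in>UNIV. \<gamma> i * real (card (homs injective (F i) (snd (F j)) T))) = 0"
  shows "\<gamma> = (\<lambda>_. 0)"
proof (rule ccontr)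
  define I where "I = {i. \<gamma> i \<noteq> 0}"
  assume "\<gamma> \<noteq> (\<lambda>_. 0)"
  hence "I \<noteq> {}" unfolding I_def by auto
  define K where "K = Max ((\<lambda>i. fst (F i)) ` I)"
  define J where "J = {i \<in> I. fst (F i) = K}"
  have "K \<in> (\<lambda>i. fst (F i)) ` I" unfolding K_def using \<open>I \<noteq> {}\<close> by (intro Max_in) auto
  then obtain j where "j \<in> J" unfolding J_def by auto
  then obtain i0 where i0: "i0 \<in> J"
    and i0_min: "\<And>i. i \<in> J \<Longrightarrow> card (snd (F i0)) \<le> card (snd (F i))"
    using ex_has_least_nat[of "\<lambda>i. i \<in> J" j "\<lambda>i. card (snd (F i))"] by blast
  have K_max: "\<And>i. i \<in> I \<Longrightarrow> fst (F i) \<le> K" unfolding K_def by simp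
  have i0I: "i0 \<in> I" and K: "fst (F i0) = K" using i0 J_def by auto
  define g where "g U = (\<Sum>i\<in>UNIV. \<gamma> i * real (card (onto_homs injective (F i) (snd (F i0)) U)))"
    for U
  have "g {0..<K} = 0"
    unfolding g_def K[symmetric] using vanish by (rule sum_onto_hom_counts_eq_zero)
  moreover have "\<gamma> i * real (card (onto_homs injective (F i) (snd (F i0)) {0..<K})) = 0"
    if "i \<noteq> i0" for i
  proof (cases "i \<in> I")
    case True
    hence "onto_homs injective (F i) (snd (F i0)) {0..<fst (F i0)} = {}"
      using K K_max i0_min
      by (intro onto_homs_empty_if_not_iso graphs distinct[OF that]) (auto simp: J_def)
    thus ?thesis using K by simp
  qed (simp add: I_def)
  hence "(\<Sum>i\<in>UNIV - {i0}. \<gamma> i * real (card (onto_homs injective (F i) (snd (F i0)) {0..<K}))) = 0"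
    by (intro sum.neutral) auto
  hence "g {0..<K} = \<gamma> i0 * real (card (onto_homs injective (F i0) (snd (F i0)) {0..<K}))"
    unfolding g_def by (simp add: sum.remove[of UNIV i0])
  moreover have "restrict id {0..<K} \<in> onto_homs injective (F i0) (snd (F i0)) {0..<K}"
    using restrict_id_in_onto_homs[OF graphs[of i0]] K by simp
  hence "card (onto_homs injective (F i0) (snd (F i0)) {0..<K}) > 0"
    using finite_onto_homs[of "{0..<K}"] by (auto simp: card_gt_0_iff)
  ultimately show False using i0I I_def by simp
qed

section \<open>Subgraph densities as ratios of injective homomorphism counts\<close>

definition copies :: "graph \<Rightarrow> graph \<Rightarrow> (nat set \<times> nat set set) set" where
  "copies F G = {(V', E'). V' \<subseteq> {0..<fst G} \<and> E' \<subseteq> snd G \<and>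
      (\<exists>f. bij_betw f {0..<fst F} V' \<and> (\<lambda>e. f ` e) ` snd F = E')}"

definition automorphisms :: "graph \<Rightarrow> (nat \<Rightarrow> nat) set" where
  "automorphisms F = {g \<in> {0..<fst F} \<rightarrow>\<^sub>E {0..<fst F}. bij_betw g {0..<fst F} {0..<fst F} \<and>
      (\<lambda>e. g ` e) ` snd F = snd F}"

definition copy_of :: "graph \<Rightarrow> (nat \<Rightarrow> nat) \<Rightarrow> nat set \<times> nat set set" where
  "copy_of F f = (f ` {0..<fst F}, (\<lambda>e. f ` e) ` snd F)"

lemma copy_of_inj_homs:
  assumes sF: "simple_graph F"
  shows "copy_of F ` homs True F (snd G) {0..<fst G} = copies F G"
proof
  show "copy_of F ` homs True F (snd G) {0..<fst G} \<subseteq> copies F G"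
    unfolding copy_of_def copies_def homs_def by (auto simp: bij_betw_def)
next
  show "copies F G \<subseteq> copy_of F ` homs True F (snd G) {0..<fst G}"
  proof
    fix c assume "c \<in> copies F G"
    then obtain V' E' f' where c: "c = (V', E')" and V': "V' \<subseteq> {0..<fst G}"
      and E': "E' \<subseteq> snd G" and bij: "bij_betw f' {0..<fst F} V'"
      and E'_eq: "(\<lambda>e. f' ` e) ` snd F = E'"
      unfolding copies_def by blast
    define f where "f = restrict f' {0..<fst F}"
    have "f ` e = f' ` e" if "e \<in> snd F" for e
      using simple_graph_edge_subset[OF sF that] unfolding f_def by auto
    hence "(\<lambda>e. f ` e) ` snd F = E'" using E'_eq by (auto simp: image_iff)
    moreover have "f ` {0..<fst F} = V'" "inj_on f {0..<fst F}"
      using bij unfolding f_def bij_betw_def inj_on_def by auto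
    ultimately have "f \<in> homs True F (snd G) {0..<fst G}" "copy_of F f = c"
      using V' E' unfolding homs_def copy_of_def c by (auto simp: f_def)
    thus "c \<in> copy_of F ` homs True F (snd G) {0..<fst G}" by blast
  qed
qed

text \<open>Each fibre of \<open>copy_of\<close> on the injective homomorphisms is an orbit of the automorphism
  group acting by precomposition.\<close>

context
  fixes F G :: graph and f0 :: "nat \<Rightarrow> nat"
  assumes sF: "simple_graph F" and f0: "f0 \<in> homs True F (snd G) {0..<fst G}"
begin

private lemma f0_inj_hom:
  "inj_on f0 {0..<fst F}" "\<And>u. u \<in> {0..<fst F} \<Longrightarrow> f0 u \<in> {0..<fst G}"
  "\<And>e. e \<in> snd F \<Longrightarrow> f0 ` e \<in> snd G"
  using f0 unfolding homs_def by auto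

lemma precompose_automorphism_in_fiber:
  assumes g: "g \<in> automorphisms F"
  shows "restrict (f0 \<circ> g) {0..<fst F} \<in> homs True F (snd G) {0..<fst G}
    \<and> copy_of F (restrict (f0 \<circ> g) {0..<fst F}) = copy_of F f0"
proof -
  have gV: "\<And>u. u \<in> {0..<fst F} \<Longrightarrow> g u \<in> {0..<fst F}" and gi: "inj_on g {0..<fst F}"
    and gim: "g ` {0..<fst F} = {0..<fst F}" and gE: "(\<lambda>e. g ` e) ` snd F = snd F"
    using g unfolding automorphisms_def bij_betw_def by auto
  have image_eq: "restrict (f0 \<circ> g) {0..<fst F} ` e = f0 ` (g ` e)" if "e \<subseteq> {0..<fst F}" for e
    using that by auto
  have "(\<lambda>e. restrict (f0 \<circ> g) {0..<fst F} ` e) ` snd F = (\<lambda>e. f0 ` (g ` e)) ` snd F"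
    by (rule image_cong[OF refl]) (rule image_eq[OF simple_graph_edge_subset[OF sF]])
  also have "\<dots> = (\<lambda>e. f0 ` e) ` ((\<lambda>e. g ` e) ` snd F)" by (simp add: image_image)
  finally have edges: "(\<lambda>e. restrict (f0 \<circ> g) {0..<fst F} ` e) ` snd F = (\<lambda>e. f0 ` e) ` snd F"
    using gE by simp
  have "inj_on (f0 \<circ> g) {0..<fst F}" using comp_inj_on[OF gi] f0_inj_hom(1) gim by simp
  moreover have "restrict (f0 \<circ> g) {0..<fst F} \<in> {0..<fst F} \<rightarrow>\<^sub>E {0..<fst G}"
    using gV f0_inj_hom(2) by (simp add: restrict_PiE_iff)
  moreover have "restrict (f0 \<circ> g) {0..<fst F} ` e \<in> snd G" if "e \<in> snd F" for e
  proof -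
    have "g ` e \<in> snd F" using gE that by blast
    thus ?thesis using image_eq[OF simple_graph_edge_subset[OF sF that]] f0_inj_hom(3) by simp
  qed
  moreover have "restrict (f0 \<circ> g) {0..<fst F} ` {0..<fst F} = f0 ` {0..<fst F}"
    using image_eq[of "{0..<fst F}"] gim by simp
  ultimately show ?thesis using edges unfolding homs_def copy_of_def by simp
qed

lemma inj_on_precompose_automorphisms:
  "inj_on (\<lambda>g. restrict (f0 \<circ> g) {0..<fst F}) (automorphisms F)"
proof (rule inj_onI)
  fix g g' assume g: "g \<in> automorphisms F" and g': "g' \<in> automorphisms F"
    and eq: "restrict (f0 \<circ> g) {0..<fst F} = restrict (f0 \<circ> g') {0..<fst F}"
  show "g = g'"
  proof (rule extensionalityI)
    show "g \<in> extensional {0..<fst F}" "g' \<in> extensional {0..<fst F}"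
      using g g' unfolding automorphisms_def by (auto simp: PiE_iff)
    fix u assume u: "u \<in> {0..<fst F}"
    hence "f0 (g u) = f0 (g' u)" using fun_cong[OF eq, of u] by simp
    moreover have "g u \<in> {0..<fst F}" "g' u \<in> {0..<fst F}"
      using g g' u unfolding automorphisms_def by auto
    ultimately show "g u = g' u" using f0_inj_hom(1) unfolding inj_on_def by blast
  qed
qed

lemma fiber_subset_precompose_automorphisms:
  assumes f: "f \<in> homs True F (snd G) {0..<fst G}" and copy: "copy_of F f = copy_of F f0"
  shows "f \<in> (\<lambda>g. restrict (f0 \<circ> g) {0..<fst F}) ` automorphisms F"
proof -
  have fim: "f ` {0..<fst F} = f0 ` {0..<fst F}"
    and fE: "(\<lambda>e. f ` e) ` snd F = (\<lambda>e. f0 ` e) ` snd F"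
    using copy unfolding copy_of_def by auto
  have fi: "inj_on f {0..<fst F}" and fext: "f \<in> extensional {0..<fst F}"
    using f unfolding homs_def by (auto simp: PiE_iff)
  define g where "g = restrict (\<lambda>u. inv_into {0..<fst F} f0 (f u)) {0..<fst F}"
  have gV: "g u \<in> {0..<fst F}" and fg: "f0 (g u) = f u" if "u \<in> {0..<fst F}" for u
  proof -
    have fu: "f u \<in> f0 ` {0..<fst F}" using that fim by blast
    show "g u \<in> {0..<fst F}" unfolding g_def using that inv_into_into[OF fu] by simp
    show "f0 (g u) = f u" unfolding g_def using that f_inv_into_f[OF fu] by simp
  qed
  have gi: "inj_on g {0..<fst F}" using fi fg by (metis inj_on_def)
  have gim: "g ` {0..<fst F} = {0..<fst F}" by (rule endo_inj_surj) (use gV gi in auto)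
  have "g ` e \<in> snd F" if e: "e \<in> snd F" for e
  proof -
    obtain e' where e': "e' \<in> snd F" "f ` e = f0 ` e'" using fE e by blast
    have "g ` e = (\<lambda>u. inv_into {0..<fst F} f0 (f u)) ` e"
      using simple_graph_edge_subset[OF sF e] unfolding g_def by (intro image_cong) auto
    also have "\<dots> = inv_into {0..<fst F} f0 ` (f ` e)" by (simp add: image_image)
    also have "\<dots> = inv_into {0..<fst F} f0 ` (f0 ` e')" using e'(2) by simp
    also have "\<dots> = e'"
      using inv_into_image_cancel[OF f0_inj_hom(1) simple_graph_edge_subset[OF sF e'(1)]] .
    finally show ?thesis using e' by simp
  qed
  hence gE_sub: "(\<lambda>e. g ` e) ` snd F \<subseteq> snd F" by blast
  have "card ((\<lambda>e. g ` e) ` snd F) = card (snd F)"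
    by (rule card_image[OF inj_on_image_edges[OF sF gi]])
  hence "(\<lambda>e. g ` e) ` snd F = snd F"
    by (rule card_subset_eq[OF simple_graph_finite_edges[OF sF] gE_sub])
  hence "g \<in> automorphisms F"
    unfolding automorphisms_def bij_betw_def using gV gi gim by (auto simp: g_def)
  moreover have "restrict (f0 \<circ> g) {0..<fst F} = f"
    by (rule extensionalityI[OF _ fext]) (auto simp: fg)
  ultimately show ?thesis by blast
qed

lemma card_fiber_copy_of:
  "card {f \<in> homs True F (snd G) {0..<fst G}. copy_of F f = copy_of F f0} = card (automorphisms F)"
proof -
  have "{f \<in> homs True F (snd G) {0..<fst G}. copy_of F f = copy_of F f0}
      = (\<lambda>g. restrict (f0 \<circ> g) {0..<fst F}) ` automorphisms F"
    using precompose_automorphism_in_fiber fiber_subset_precompose_automorphisms by blast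
  thus ?thesis using card_image[OF inj_on_precompose_automorphisms] by simp
qed

end

lemma card_automorphisms_pos:
  assumes sF: "simple_graph F"
  shows "card (automorphisms F) > 0"
proof -
  have "finite (automorphisms F)"
    unfolding automorphisms_def
    by (rule finite_subset[of _ "{0..<fst F} \<rightarrow>\<^sub>E {0..<fst F}"]) (auto intro: finite_PiE)
  moreover have "restrict id {0..<fst F} ` e = e" if "e \<in> snd F" for e
    using simple_graph_edge_subset[OF sF that] by auto
  hence "restrict id {0..<fst F} \<in> automorphisms F"
    unfolding automorphisms_def bij_betw_def inj_on_def by auto
  ultimately show ?thesis by (auto simp: card_gt_0_iff)
qed

lemma card_inj_homs:
  assumes sF: "simple_graph F"
  shows "card (homs True F (snd G) {0..<fst G}) = tL F G * card (automorphisms F)"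
proof -
  let ?A = "homs True F (snd G) {0..<fst G}"
  have "?A = (\<Union>c\<in>copy_of F ` ?A. {f \<in> ?A. copy_of F f = c})" by blast
  moreover have "card (\<Union>c\<in>copy_of F ` ?A. {f \<in> ?A. copy_of F f = c})
      = (\<Sum>c\<in>copy_of F ` ?A. card {f \<in> ?A. copy_of F f = c})"
    using finite_homs[of "{0..<fst G}" True F "snd G"] by (intro card_UN_disjoint) auto
  moreover have "(\<Sum>c\<in>copy_of F ` ?A. card {f \<in> ?A. copy_of F f = c})
      = (\<Sum>c\<in>copy_of F ` ?A. card (automorphisms F))"
    using card_fiber_copy_of[OF sF] by (intro sum.cong) auto
  moreover have "card (copy_of F ` ?A) = tL F G"
    unfolding copy_of_inj_homs[OF sF] tL_def copies_def by simp
  ultimately show ?thesis by simp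
qed

lemma tdens_eq_inj_homs_ratio:
  assumes sF: "simple_graph F" and le: "fst F \<le> fst G"
  shows "tdens F G = real (card (homs True F (snd G) {0..<fst G}))
                   / real (card (homs True F (snd (complete_graph (fst G))) {0..<fst G}))"
  using card_inj_homs[OF sF, of G] card_inj_homs[OF sF, of "complete_graph (fst G)"]
    card_automorphisms_pos[OF sF] le
  unfolding tdens_def by (simp add: complete_graph_def)

lemma card_inj_homs_complete_graph:
  assumes sF: "simple_graph F"
  shows "card (homs True F (snd (complete_graph N)) {0..<N}) = (\<Prod>l\<in>{0..<fst F}. N - l)"
proof -
  have "f ` e \<in> snd (complete_graph N)"
    if f: "f \<in> {0..<fst F} \<rightarrow>\<^sub>E {0..<N}" "inj_on f {0..<fst F}" and e: "e \<in> snd F" for f e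
  proof -
    obtain u v where uv: "u \<noteq> v" "u < fst F" "v < fst F" "e = {u, v}"
      using sF e unfolding simple_graph_def by blast
    hence "f u \<noteq> f v" using inj_onD[OF f(2)] by fastforce
    moreover have "f u < N" "f v < N" using f(1) uv by (auto simp: PiE_iff)
    ultimately show ?thesis using uv(4) unfolding complete_graph_def by auto
  qed
  hence "homs True F (snd (complete_graph N)) {0..<N}
      = {f \<in> {0..<fst F} \<rightarrow>\<^sub>E {0..<N}. inj_on f {0..<fst F}}"
    unfolding homs_def by auto
  thus ?thesis by (simp add: card_inj_on_subset_funcset)
qed

section \<open>Spanning vectors of homomorphism counts\<close>

definition induced_index :: "('d \<Rightarrow> graph) \<Rightarrow> ('d \<times> nat set) set" where
  "induced_index F = Sigma UNIV (\<lambda>j. Pow {0..<fst (F j)})"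

definition hom_vector :: "bool \<Rightarrow> ('d \<Rightarrow> graph) \<Rightarrow> ('d \<Rightarrow> real) \<Rightarrow> 'd \<times> nat set \<Rightarrow> real ^ 'd" where
  "hom_vector injective F w =
    (\<lambda>(j, T). \<chi> i. real (card (homs injective (F i) (snd (F j)) T)) / w i)"

lemma finite_induced_index: "finite (induced_index (F :: 'd::finite \<Rightarrow> graph))"
  unfolding induced_index_def by (intro finite_SigmaI) auto

lemma span_hom_vectors:
  fixes F :: "'d::finite \<Rightarrow> graph" and w :: "'d \<Rightarrow> real"
  assumes graphs: "\<And>i. simple_graph (F i)"
    and distinct: "\<And>i j. i \<noteq> j \<Longrightarrow> \<not> graph_iso (F i) (F j)"
    and w: "\<And>i. w i > 0"
  shows "span (hom_vector injective F w ` induced_index F) = UNIV"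
proof (rule ccontr)
  assume "span (hom_vector injective F w ` induced_index F) \<noteq> UNIV"
  then obtain a :: "real^'d" where a: "a \<noteq> 0"
    and orth: "span (hom_vector injective F w ` induced_index F) \<subseteq> {x. a \<bullet> x = 0}"
    using span_not_univ_subset_hyperplane by blast
  have "(\<lambda>i. a $ i / w i) = (\<lambda>_. 0)"
  proof (rule hom_counts_linearly_independent[OF graphs distinct])
    fix j T assume "T \<subseteq> {0..<fst (F j)}"
    hence "hom_vector injective F w (j, T) \<in> span (hom_vector injective F w ` induced_index F)"
      unfolding induced_index_def by (intro span_base imageI) blast
    hence "a \<bullet> hom_vector injective F w (j, T) = 0" using orth by blast
    thus "(\<Sum>i\<in>UNIV. a $ i / w i * real (card (homs injective (F i) (snd (F j)) T))) = 0"
      by (simp add: hom_vector_def inner_vec_def)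
  qed
  hence "a = 0" using w by (metis (mono_tags) divide_eq_0_iff less_irrefl vec_eq_iff zero_index)
  thus False using a by simp
qed

lemma zero_in_hom_vectors:
  fixes F :: "'d::finite \<Rightarrow> graph"
  assumes nonempty: "\<And>i. fst (F i) \<ge> 1"
  shows "0 \<in> hom_vector injective F w ` induced_index F"
proof -
  obtain j :: 'd where True by simp
  have "{0..<fst (F i)} \<rightarrow>\<^sub>E ({} :: nat set) = {}" for i
  proof -
    have "0 \<in> {0..<fst (F i)}" using nonempty[of i] by simp
    thus ?thesis using PiE_eq_empty_iff[of "{0..<fst (F i)}" "\<lambda>_. {}"] by blast
  qed
  hence "homs injective (F i) E {} = {}" for i E unfolding homs_def by simp
  hence "hom_vector injective F w (j, {}) = 0" by (simp add: hom_vector_def vec_eq_iff)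
  moreover have "(j, {}) \<in> induced_index F" unfolding induced_index_def by blast
  ultimately show ?thesis by (metis image_eqI)
qed

lemma interior_convex_hull_hom_vectors:
  fixes F :: "'d::finite \<Rightarrow> graph" and w :: "'d \<Rightarrow> real"
  assumes "\<And>i. simple_graph (F i)" "\<And>i. fst (F i) \<ge> 1"
    and "\<And>i j. i \<noteq> j \<Longrightarrow> \<not> graph_iso (F i) (F j)" "\<And>i. w i > 0"
  shows "interior (convex hull (hom_vector injective F w ` induced_index F)) \<noteq> {}"
  using assms by (intro interior_convex_hull_nonempty zero_in_hom_vectors span_hom_vectors)

lemma finite_graphs_of_order: "finite {G. simple_graph G \<and> fst G = n}"
proof (rule finite_subset)
  show "{G. simple_graph G \<and> fst G = n} \<subseteq> {n} \<times> Pow (Pow {0..<n})"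
    using simple_graph_edge_subset by fastforce
qed auto

lemma compact_subgraph_polytope: "compact (subgraph_polytope F n)"
proof -
  have "{tvec F G | G. simple_graph G \<and> fst G = n} = tvec F ` {G. simple_graph G \<and> fst G = n}"
    by blast
  thus ?thesis unfolding subgraph_polytope_def
    using finite_graphs_of_order by (intro compact_convex_hull finite_imp_compact) simp
qed

lemma convex_hull_subset_subgraph_polytope:
  assumes "\<And>x. x \<in> S \<Longrightarrow> \<exists>G. simple_graph G \<and> fst G = n \<and> x = tvec F G"
  shows "convex hull S \<subseteq> subgraph_polytope F n"
  unfolding subgraph_polytope_def using assms by (intro hull_mono) blast

definition padded_induced :: "nat \<Rightarrow> graph \<Rightarrow> nat set \<Rightarrow> graph" where
  "padded_induced n H T = (n, {e \<in> snd H. e \<subseteq> T})"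

lemma simple_graph_padded_induced:
  "simple_graph H \<Longrightarrow> fst H \<le> n \<Longrightarrow> simple_graph (padded_induced n H T)"
  unfolding simple_graph_def padded_induced_def by fastforce

text \<open>Without isolated vertices, every vertex of F must land in T.\<close>

lemma homs_padded_induced:
  assumes sF: "simple_graph F" and ni: "no_isolated F" and T: "T \<subseteq> {0..<n}"
  shows "homs injective F (snd (padded_induced n H T)) {0..<n} = homs injective F (snd H) T"
proof
  show "homs injective F (snd (padded_induced n H T)) {0..<n} \<subseteq> homs injective F (snd H) T"
  proof
    fix f assume f: "f \<in> homs injective F (snd (padded_induced n H T)) {0..<n}"
    hence fe: "\<And>e. e \<in> snd F \<Longrightarrow> f ` e \<in> snd H \<and> f ` e \<subseteq> T"
      unfolding homs_def padded_induced_def by auto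
    have "f u \<in> T" if u: "u \<in> {0..<fst F}" for u
    proof -
      obtain e where "e \<in> snd F" "u \<in> e" using ni u unfolding no_isolated_def by auto
      thus ?thesis using fe by blast
    qed
    thus "f \<in> homs injective F (snd H) T" using f fe unfolding homs_def by (auto simp: PiE_iff)
  qed
next
  show "homs injective F (snd H) T \<subseteq> homs injective F (snd (padded_induced n H T)) {0..<n}"
  proof
    fix f assume f: "f \<in> homs injective F (snd H) T"
    hence fT: "f \<in> {0..<fst F} \<rightarrow>\<^sub>E T" unfolding homs_def by blast
    have "f ` e \<subseteq> T" if "e \<in> snd F" for e
      using fT simple_graph_edge_subset[OF sF that] by (auto simp: PiE_iff)
    moreover have "f \<in> {0..<fst F} \<rightarrow>\<^sub>E {0..<n}" using fT T by (auto simp: PiE_iff)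
    ultimately show "f \<in> homs injective F (snd (padded_induced n H T)) {0..<n}"
      using f unfolding homs_def padded_induced_def by auto
  qed
qed

lemma subgraph_polytope_measure_pos:
  fixes F :: "'d::finite \<Rightarrow> graph"
  assumes graphs: "\<And>i. simple_graph (F i)"
    and nonempty: "\<And>i. fst (F i) \<ge> 1"
    and noiso: "\<And>i. no_isolated (F i)"
    and distinct: "\<And>i j. i \<noteq> j \<Longrightarrow> \<not> graph_iso (F i) (F j)"
    and n: "\<And>i. fst (F i) \<le> n"
  shows "measure lborel (subgraph_polytope F n) > 0"
proof -
  define w where "w i = real (card (homs True (F i) (snd (complete_graph n)) {0..<n}))" for i
  have w: "w i > 0" for i
    using n[of i] unfolding w_def card_inj_homs_complete_graph[OF graphs] by (auto intro: prod_pos)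
  have hull: "convex hull (hom_vector True F w ` induced_index F) \<subseteq> subgraph_polytope F n"
  proof (rule convex_hull_subset_subgraph_polytope)
    fix x assume "x \<in> hom_vector True F w ` induced_index F"
    then obtain j T where T: "T \<subseteq> {0..<fst (F j)}" and x: "x = hom_vector True F w (j, T)"
      unfolding induced_index_def by auto
    have "tdens (F i) (padded_induced n (F j) T)
        = real (card (homs True (F i) (snd (F j)) T)) / w i" for i
    proof -
      have n_eq: "fst (padded_induced n (F j) T) = n" by (simp add: padded_induced_def)
      have "tdens (F i) (padded_induced n (F j) T)
          = real (card (homs True (F i) (snd (padded_induced n (F j) T)) {0..<n})) / w i"
        using tdens_eq_inj_homs_ratio[OF graphs, of i "padded_induced n (F j) T"] n[of i]
        unfolding n_eq w_def by simp
      also have "homs True (F i) (snd (padded_induced n (F j) T)) {0..<n}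
          = homs True (F i) (snd (F j)) T"
        using T n[of j] by (intro homs_padded_induced graphs noiso) auto
      finally show ?thesis .
    qed
    hence "x = tvec F (padded_induced n (F j) T)"
      unfolding x tvec_def hom_vector_def by (simp add: vec_eq_iff)
    moreover have "simple_graph (padded_induced n (F j) T)"
      by (rule simple_graph_padded_induced[OF graphs n])
    ultimately show "\<exists>G. simple_graph G \<and> fst G = n \<and> x = tvec F G"
      by (auto simp: padded_induced_def)
  qed
  have "interior (subgraph_polytope F n) \<noteq> {}"
    using interior_mono[OF hull] interior_convex_hull_hom_vectors[of F w True, OF graphs nonempty distinct w]
    by blast
  thus ?thesis by (rule measure_pos_if_interior_nonempty[OF _ compact_subgraph_polytope])
qed

section \<open>Blow-ups\<close>

text \<open>The subgraph of H induced on T with every vertex v replaced by the independent block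
  \<open>{v*m..<v*m+m}\<close> (and each edge by a complete bipartite graph), padded to n vertices.\<close>

definition blow_up :: "nat \<Rightarrow> nat \<Rightarrow> graph \<Rightarrow> nat set \<Rightarrow> graph" where
  "blow_up n m H T = (n, {{v * m + a, w * m + c} | v w a c.
      {v, w} \<in> snd H \<and> v \<in> T \<and> w \<in> T \<and> a < m \<and> c < m})"

lemma block_index_less:
  fixes z b k m n :: nat
  assumes "z < k" "k * m \<le> n" "b < m"
  shows "z * m + b < n"
proof -
  have "(z + 1) * m \<le> k * m" using assms(1) by (intro mult_right_mono) auto
  thus ?thesis using assms by (simp add: algebra_simps)
qed

lemma simple_graph_blow_up:
  assumes sH: "simple_graph H" and T: "T \<subseteq> {0..<fst H}" and le: "fst H * m \<le> n"
  shows "simple_graph (blow_up n m H T)"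
  unfolding simple_graph_def
proof
  fix e assume "e \<in> snd (blow_up n m H T)"
  then obtain v w a c where e: "e = {v * m + a, w * m + c}"
    and vw: "{v, w} \<in> snd H" "v \<in> T" "w \<in> T" "a < m" "c < m"
    unfolding blow_up_def by auto
  obtain x y where "x \<noteq> y" "{v, w} = {x, y}" using sH vw(1) unfolding simple_graph_def by blast
  hence "v \<noteq> w" by (metis doubleton_eq_iff)
  have "v * m + a \<noteq> w * m + c"
  proof
    assume "v * m + a = w * m + c"
    hence "(v * m + a) div m = (w * m + c) div m" by simp
    hence "v = w" using vw by simp
    thus False using \<open>v \<noteq> w\<close> by simp
  qed
  moreover have "v * m + a < n" "w * m + c < n"
    using vw T le by (auto intro!: block_index_less[of _ "fst H"])
  ultimately show "\<exists>u v. u \<noteq> v \<and> u < fst (blow_up n m H T) \<and> v < fst (blow_up n m H T) \<and> e = {u, v}"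
    using e by (auto simp: blow_up_def)
qed

text \<open>A homomorphism \<open>\<psi>\<close> into the induced subgraph together with an injective choice \<open>a\<close> of
  positions inside the blocks gives the injective homomorphism \<open>u \<mapsto> \<psi> u * m + a u\<close> into the
  blow-up; quotient and remainder by m recover the pair.\<close>

lemma card_inj_homs_blow_up_ge:
  assumes T: "T \<subseteq> {0..<fst H}" and le: "fst H * m \<le> n" and sF: "simple_graph F"
  shows "card (homs False F (snd H) T) * (\<Prod>l\<in>{0..<fst F}. m - l)
         \<le> card (homs True F (snd (blow_up n m H T)) {0..<n})"
proof -
  let ?K = "{0..<fst F}"
  let ?A = "homs False F (snd H) T"
  let ?B = "{a \<in> ?K \<rightarrow>\<^sub>E {0..<m}. inj_on a ?K}"
  define L where "L p = restrict (\<lambda>u. fst p u * m + snd p u) ?K"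
    for p :: "(nat \<Rightarrow> nat) \<times> (nat \<Rightarrow> nat)"
  have inj: "inj_on L (?A \<times> ?B)"
  proof (rule inj_onI)
    fix p q assume p: "p \<in> ?A \<times> ?B" and q: "q \<in> ?A \<times> ?B" and eq: "L p = L q"
    have val: "fst p u * m + snd p u = fst q u * m + snd q u" if "u \<in> ?K" for u
      using fun_cong[OF eq, of u] that unfolding L_def by simp
    have small: "snd p u < m" "snd q u < m" if "u \<in> ?K" for u
      using p q that by (auto simp: PiE_iff)
    have "fst p u = fst q u" if "u \<in> ?K" for u
      using arg_cong[OF val[OF that], of "\<lambda>x. x div m"] small[OF that] by simp
    moreover have "snd p u = snd q u" if "u \<in> ?K" for u
      using arg_cong[OF val[OF that], of "\<lambda>x. x mod m"] small[OF that] by simp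
    ultimately have "fst p = fst q" "snd p = snd q"
      using p q by (auto intro!: extensionalityI[of _ ?K] simp: homs_def PiE_iff)
    thus "p = q" by (simp add: prod_eq_iff)
  qed
  have "L ` (?A \<times> ?B) \<subseteq> homs True F (snd (blow_up n m H T)) {0..<n}"
  proof
    fix f assume "f \<in> L ` (?A \<times> ?B)"
    then obtain \<psi> a where \<psi>: "\<psi> \<in> ?A" and a: "a \<in> ?B" and f: "f = L (\<psi>, a)" by blast
    have \<psi>T: "\<psi> u \<in> T" if "u \<in> ?K" for u using \<psi> that unfolding homs_def by (auto simp: PiE_iff)
    have am: "a u < m" if "u \<in> ?K" for u using a that by (auto simp: PiE_iff)
    have fv: "f u = \<psi> u * m + a u" if "u \<in> ?K" for u using that unfolding f L_def by simp
    have "\<psi> u * m + a u < n" if "u \<in> ?K" for u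
      using \<psi>T[OF that] am[OF that] T le by (intro block_index_less[of _ "fst H"]) auto
    hence "f \<in> ?K \<rightarrow>\<^sub>E {0..<n}" unfolding f L_def by auto
    moreover have "inj_on f ?K"
    proof (rule inj_onI)
      fix u u' assume u: "u \<in> ?K" "u' \<in> ?K" "f u = f u'"
      hence "(\<psi> u * m + a u) mod m = (\<psi> u' * m + a u') mod m" using fv by simp
      hence "a u = a u'" using am u by simp
      thus "u = u'" using a u unfolding inj_on_def by blast
    qed
    moreover have "f ` e \<in> snd (blow_up n m H T)" if e: "e \<in> snd F" for e
    proof -
      obtain x y where xy: "x < fst F" "y < fst F" "e = {x, y}"
        using sF e unfolding simple_graph_def by blast
      have "{\<psi> x, \<psi> y} \<in> snd H" using \<psi> e xy unfolding homs_def by auto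
      moreover have "f ` e = {\<psi> x * m + a x, \<psi> y * m + a y}" using xy fv by simp
      moreover have "\<psi> x \<in> T" "\<psi> y \<in> T" "a x < m" "a y < m" using xy \<psi>T am by auto
      ultimately show ?thesis unfolding blow_up_def by auto
    qed
    ultimately show "f \<in> homs True F (snd (blow_up n m H T)) {0..<n}" unfolding homs_def by blast
  qed
  hence "card (L ` (?A \<times> ?B)) \<le> card (homs True F (snd (blow_up n m H T)) {0..<n})"
    by (rule card_mono[OF finite_homs[OF finite_atLeastLessThan]])
  hence "card (?A \<times> ?B) \<le> card (homs True F (snd (blow_up n m H T)) {0..<n})"
    using card_image[OF inj] by simp
  moreover have "card ?B = (\<Prod>l\<in>?K. m - l)" by (simp add: card_inj_on_subset_funcset)
  ultimately show ?thesis by (simp add: card_cartesian_product)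
qed

text \<open>Conversely every homomorphism into the blow-up arises in this way from a pair with
  arbitrary positions; this needs every vertex of F to lie on an edge, so that its block lies
  in T.\<close>

lemma card_inj_homs_blow_up_le:
  assumes T: "T \<subseteq> {0..<fst H}" and m: "m > 0" and sF: "simple_graph F" and ni: "no_isolated F"
  shows "card (homs True F (snd (blow_up n m H T)) {0..<n}) \<le> card (homs False F (snd H) T) * m ^ fst F"
proof -
  let ?K = "{0..<fst F}"
  let ?A = "homs False F (snd H) T"
  let ?B = "?K \<rightarrow>\<^sub>E {0..<m}"
  define L where "L p = restrict (\<lambda>u. fst p u * m + snd p u) ?K"
    for p :: "(nat \<Rightarrow> nat) \<times> (nat \<Rightarrow> nat)"
  have "homs True F (snd (blow_up n m H T)) {0..<n} \<subseteq> L ` (?A \<times> ?B)"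
  proof
    fix f assume f: "f \<in> homs True F (snd (blow_up n m H T)) {0..<n}"
    have fext: "f \<in> extensional ?K" using f unfolding homs_def by (auto simp: PiE_iff)
    have fe: "\<And>e. e \<in> snd F \<Longrightarrow> f ` e \<in> snd (blow_up n m H T)" using f unfolding homs_def by blast
    define \<psi> where "\<psi> = restrict (\<lambda>u. f u div m) ?K"
    define a where "a = restrict (\<lambda>u. f u mod m) ?K"
    have edge: "\<psi> ` e \<in> snd H \<and> \<psi> ` e \<subseteq> T" if e: "e \<in> snd F" for e
    proof -
      obtain v w a' c where ev: "f ` e = {v * m + a', w * m + c}"
        and vw: "{v, w} \<in> snd H" "v \<in> T" "w \<in> T" "a' < m" "c < m"
        using fe[OF e] unfolding blow_up_def by auto
      have "\<psi> ` e = (\<lambda>z. z div m) ` (f ` e)"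
        using simple_graph_edge_subset[OF sF e] unfolding \<psi>_def by auto
      also have "\<dots> = {v, w}" using ev vw m by simp
      finally show ?thesis using vw by simp
    qed
    have \<psi>T: "\<psi> u \<in> T" if u: "u \<in> ?K" for u
    proof -
      obtain e where "e \<in> snd F" "u \<in> e" using ni u unfolding no_isolated_def by auto
      thus ?thesis using edge by blast
    qed
    have "\<psi> \<in> ?A" unfolding homs_def using \<psi>T edge by (auto simp: \<psi>_def)
    moreover have "a \<in> ?B" using m unfolding a_def by auto
    moreover have "L (\<psi>, a) = f"
      by (rule extensionalityI[OF _ fext]) (auto simp: L_def \<psi>_def a_def)
    ultimately show "f \<in> L ` (?A \<times> ?B)" by blast
  qed
  moreover have fin: "finite (?A \<times> ?B)"
    using finite_subset[OF T] by (intro finite_cartesian_product finite_homs finite_PiE) auto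
  ultimately have "card (homs True F (snd (blow_up n m H T)) {0..<n}) \<le> card (L ` (?A \<times> ?B))"
    by (intro card_mono finite_imageI)
  also have "\<dots> \<le> card (?A \<times> ?B)" by (rule card_image_le[OF fin])
  finally have "card (homs True F (snd (blow_up n m H T)) {0..<n}) \<le> card (?A \<times> ?B)" .
  thus ?thesis by (simp add: card_cartesian_product card_PiE)
qed

lemma tendsto_nat_div_over:
  assumes s: "s > 0"
  shows "(\<lambda>n::nat. real (n div s) / real n) \<longlonglongrightarrow> 1 / real s"
proof (rule tendsto_sandwich)
  have bounds: "real n / real s - 1 \<le> real (n div s) \<and> real (n div s) \<le> real n / real s" for n
  proof -
    have "real (n div s) = of_int \<lfloor>real n / real s\<rfloor>"
      using floor_divide_of_nat_eq[of n s, where 'a=real] by simp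
    thus ?thesis by linarith
  qed
  show "eventually (\<lambda>n. 1 / real s - 1 / real n \<le> real (n div s) / real n) sequentially"
  proof (rule eventually_sequentiallyI[of 1])
    fix n :: nat assume "1 \<le> n"
    hence "(real n / real s - 1) / real n \<le> real (n div s) / real n"
      using bounds[of n] by (intro divide_right_mono) auto
    moreover have "(real n / real s - 1) / real n = 1 / real s - 1 / real n"
      using \<open>1 \<le> n\<close> by (simp add: field_simps)
    ultimately show "1 / real s - 1 / real n \<le> real (n div s) / real n" by simp
  qed
  show "eventually (\<lambda>n. real (n div s) / real n \<le> 1 / real s) sequentially"
  proof (rule eventually_sequentiallyI[of 1])
    fix n :: nat assume "1 \<le> n"
    hence "real (n div s) / real n \<le> (real n / real s) / real n"
      using bounds[of n] by (intro divide_right_mono) auto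
    also have "\<dots> = 1 / real s" using \<open>1 \<le> n\<close> by simp
    finally show "real (n div s) / real n \<le> 1 / real s" .
  qed
  show "(\<lambda>n. 1 / real s - 1 / real n) \<longlonglongrightarrow> 1 / real s"
    using tendsto_diff[OF tendsto_const lim_1_over_n, of "1 / real s"] by simp
qed simp

lemma tendsto_nat_div_diff_over_diff:
  assumes s: "s > 0"
  shows "(\<lambda>n::nat. real (n div s - l') / real (n - l)) \<longlonglongrightarrow> 1 / real s"
proof -
  have "(\<lambda>n::nat. (real (n div s) / real n - real l' * (1 / real n)) / (1 - real l * (1 / real n)))
        \<longlonglongrightarrow> (1 / real s - real l' * 0) / (1 - real l * 0)"
    by (intro tendsto_intros tendsto_nat_div_over[OF s] lim_1_over_n) simp
  moreover have "eventually (\<lambda>n. (real (n div s) / real n - real l' * (1 / real n))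
        / (1 - real l * (1 / real n)) = real (n div s - l') / real (n - l)) sequentially"
  proof (rule eventually_sequentiallyI[of "(l' + l + 1) * s"])
    fix n assume n: "(l' + l + 1) * s \<le> n"
    have "(l' + l + 1) * s div s \<le> n div s" by (rule div_le_mono[OF n])
    hence "l' \<le> n div s" using s by simp
    moreover have "(l' + l + 1) * 1 \<le> (l' + l + 1) * s" using s by (intro mult_le_mono2) simp
    hence "l < n" using n by simp
    ultimately show "(real (n div s) / real n - real l' * (1 / real n)) / (1 - real l * (1 / real n))
        = real (n div s - l') / real (n - l)" by (simp add: of_nat_diff field_simps)
  qed
  ultimately show ?thesis by (simp add: Lim_transform_eventually)
qed

lemma tendsto_blow_up_counting_ratios:
  assumes s: "s > 0"
  shows "(\<lambda>n::nat. real (\<Prod>l\<in>{0..<k}. n div s - l) / real (\<Prod>l\<in>{0..<k}. n - l))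
           \<longlonglongrightarrow> (1 / real s) ^ k"
    and "(\<lambda>n::nat. real (n div s) ^ k / real (\<Prod>l\<in>{0..<k}. n - l)) \<longlonglongrightarrow> (1 / real s) ^ k"
proof -
  have "(\<lambda>n::nat. \<Prod>l\<in>{0..<k}. real (n div s - l) / real (n - l)) \<longlonglongrightarrow> (\<Prod>l\<in>{0..<k}. 1 / real s)"
    by (intro tendsto_prod tendsto_nat_div_diff_over_diff[OF s])
  thus "(\<lambda>n::nat. real (\<Prod>l\<in>{0..<k}. n div s - l) / real (\<Prod>l\<in>{0..<k}. n - l))
           \<longlonglongrightarrow> (1 / real s) ^ k" by (simp add: prod_dividef)
  have "(\<lambda>n::nat. \<Prod>l\<in>{0..<k}. real (n div s - 0) / real (n - l)) \<longlonglongrightarrow> (\<Prod>l\<in>{0..<k}. 1 / real s)"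
    by (intro tendsto_prod tendsto_nat_div_diff_over_diff[OF s])
  thus "(\<lambda>n::nat. real (n div s) ^ k / real (\<Prod>l\<in>{0..<k}. n - l)) \<longlonglongrightarrow> (1 / real s) ^ k"
    by (simp add: prod_dividef)
qed

lemma tdens_blow_up_bounds:
  assumes sF: "simple_graph F" and ni: "no_isolated F" and T: "T \<subseteq> {0..<fst H}"
    and le: "fst H * m \<le> n" and m: "m > 0" and Fn: "fst F \<le> n"
  defines "h \<equiv> real (card (homs False F (snd H) T))"
    and "D \<equiv> real (\<Prod>l\<in>{0..<fst F}. n - l)"
  shows "h * (real (\<Prod>l\<in>{0..<fst F}. m - l) / D) \<le> tdens F (blow_up n m H T)"
    and "tdens F (blow_up n m H T) \<le> h * (real m ^ fst F / D)"
proof -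
  have D: "D > 0" unfolding D_def using Fn by (auto intro: prod_pos)
  have tdens: "tdens F (blow_up n m H T)
      = real (card (homs True F (snd (blow_up n m H T)) {0..<n})) / D"
    using tdens_eq_inj_homs_ratio[OF sF, of "blow_up n m H T"] Fn
      card_inj_homs_complete_graph[OF sF, of n]
    unfolding D_def by (simp add: blow_up_def)
  have "real (card (homs False F (snd H) T) * (\<Prod>l\<in>{0..<fst F}. m - l))
      \<le> real (card (homs True F (snd (blow_up n m H T)) {0..<n}))"
    using card_inj_homs_blow_up_ge[OF T le sF] by (rule of_nat_mono)
  hence "h * real (\<Prod>l\<in>{0..<fst F}. m - l)
      \<le> real (card (homs True F (snd (blow_up n m H T)) {0..<n}))"
    unfolding h_def by (simp only: of_nat_mult)
  thus "h * (real (\<Prod>l\<in>{0..<fst F}. m - l) / D) \<le> tdens F (blow_up n m H T)"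
    unfolding tdens using D by (simp add: divide_right_mono)
  have "real (card (homs True F (snd (blow_up n m H T)) {0..<n}))
      \<le> real (card (homs False F (snd H) T) * m ^ fst F)"
    using card_inj_homs_blow_up_le[OF T m sF ni] by (rule of_nat_mono)
  hence "real (card (homs True F (snd (blow_up n m H T)) {0..<n})) \<le> h * real m ^ fst F"
    unfolding h_def by (simp only: of_nat_mult of_nat_power)
  thus "tdens F (blow_up n m H T) \<le> h * (real m ^ fst F / D)"
    unfolding tdens using D by (simp add: divide_right_mono)
qed

lemma tdens_blow_up_tendsto:
  assumes sF: "simple_graph F" and ni: "no_isolated F" and T: "T \<subseteq> {0..<fst H}"
    and s: "s > 0" "fst F \<le> s" "fst H \<le> s"
  shows "(\<lambda>n. tdens F (blow_up n (n div s) H T))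
          \<longlonglongrightarrow> real (card (homs False F (snd H) T)) / real s ^ fst F"
proof -
  define h where "h = real (card (homs False F (snd H) T))"
  define lower where "lower n = h * (real (\<Prod>l\<in>{0..<fst F}. n div s - l)
      / real (\<Prod>l\<in>{0..<fst F}. n - l))" for n
  define upper where "upper n = h * (real (n div s) ^ fst F / real (\<Prod>l\<in>{0..<fst F}. n - l))"
    for n
  have bounds: "lower n \<le> tdens F (blow_up n (n div s) H T)
      \<and> tdens F (blow_up n (n div s) H T) \<le> upper n" if n: "s \<le> n" for n
  proof -
    have "fst H * (n div s) \<le> s * (n div s)" using s(3) by simp
    also have "\<dots> \<le> n" by simp
    finally have "fst H * (n div s) \<le> n" .
    moreover have "n div s > 0" using n s(1) by (simp add: div_greater_zero_iff)
    ultimately show ?thesis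
      using tdens_blow_up_bounds[OF sF ni T] n s(2) unfolding lower_def upper_def h_def by simp
  qed
  have "\<forall>\<^sub>F n in sequentially. lower n \<le> tdens F (blow_up n (n div s) H T)"
    by (rule eventually_sequentiallyI[of s]) (use bounds in blast)
  moreover have "\<forall>\<^sub>F n in sequentially. tdens F (blow_up n (n div s) H T) \<le> upper n"
    by (rule eventually_sequentiallyI[of s]) (use bounds in blast)
  moreover have "lower \<longlonglongrightarrow> h * (1 / real s) ^ fst F"
    unfolding lower_def by (rule tendsto_mult_left[OF tendsto_blow_up_counting_ratios(1)[OF s(1)]])
  moreover have "upper \<longlonglongrightarrow> h * (1 / real s) ^ fst F"
    unfolding upper_def by (rule tendsto_mult_left[OF tendsto_blow_up_counting_ratios(2)[OF s(1)]])
  ultimately have "(\<lambda>n. tdens F (blow_up n (n div s) H T)) \<longlonglongrightarrow> h * (1 / real s) ^ fst F"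
    by (rule tendsto_sandwich)
  thus ?thesis unfolding h_def by (simp add: power_one_over)
qed

section \<open>The volume bound\<close>

lemma subgraph_polytope_eventually_contains_ball:
  fixes F :: "'d::finite \<Rightarrow> graph" and n0 :: nat
  assumes graphs: "\<And>i. simple_graph (F i)"
    and nonempty: "\<And>i. fst (F i) \<ge> 1"
    and noiso: "\<And>i. no_isolated (F i)"
    and distinct: "\<And>i j. i \<noteq> j \<Longrightarrow> \<not> graph_iso (F i) (F j)"
    and n0: "\<And>i. fst (F i) \<le> n0"
  shows "\<exists>z r. r > 0 \<and> (\<forall>\<^sub>F n in sequentially. ball z r \<subseteq> subgraph_polytope F n)"
proof -
  have "1 \<le> n0" by (rule le_trans[OF nonempty n0])
  hence "n0 > 0" by simp
  define w where "w i = real n0 ^ fst (F i)" for i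
  have w: "w i > 0" for i unfolding w_def using \<open>n0 > 0\<close> by simp
  define v where "v n = (\<lambda>(j, T). tvec F (blow_up n (n div n0) (F j) T))" for n
  obtain z e where e: "e > 0" "ball z e \<subseteq> convex hull (hom_vector False F w ` induced_index F)"
    using interior_convex_hull_hom_vectors[of F w False, OF graphs nonempty distinct w]
      open_contains_ball[of "interior _"] interior_subset by blast
  have "(\<lambda>n. v n p) \<longlonglongrightarrow> hom_vector False F w p" if p: "p \<in> induced_index F" for p
  proof -
    obtain j T where jT: "p = (j, T)" and T: "T \<subseteq> {0..<fst (F j)}"
      using p unfolding induced_index_def by auto
    have "(\<lambda>n. \<chi> i. tdens (F i) (blow_up n (n div n0) (F j) T))
        \<longlonglongrightarrow> (\<chi> i. real (card (homs False (F i) (snd (F j)) T)) / w i)"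
      unfolding w_def using graphs noiso T \<open>n0 > 0\<close> n0
      by (intro tendsto_vec_lambda tdens_blow_up_tendsto) auto
    thus ?thesis unfolding v_def jT tvec_def hom_vector_def by simp
  qed
  hence "\<forall>p\<in>induced_index F. \<forall>\<^sub>F n in sequentially. dist (v n p) (hom_vector False F w p) < e / 2"
    using e(1) by (intro ballI tendstoD) simp_all
  hence close: "\<forall>\<^sub>F n in sequentially.
      \<forall>p\<in>induced_index F. dist (v n p) (hom_vector False F w p) < e / 2"
    by (rule eventually_ball_finite[OF finite_induced_index])
  have hull: "convex hull (v n ` induced_index F) \<subseteq> subgraph_polytope F n"
    if "n0 \<le> n" for n
  proof (rule convex_hull_subset_subgraph_polytope)
    fix x assume "x \<in> v n ` induced_index F"
    then obtain j T where T: "T \<subseteq> {0..<fst (F j)}" and x: "x = tvec F (blow_up n (n div n0) (F j) T)"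
      unfolding v_def induced_index_def by auto
    have "fst (F j) * (n div n0) \<le> n0 * (n div n0)" using n0[of j] by simp
    also have "\<dots> \<le> n" by simp
    finally have "simple_graph (blow_up n (n div n0) (F j) T)"
      by (rule simple_graph_blow_up[OF graphs T])
    thus "\<exists>G. simple_graph G \<and> fst G = n \<and> x = tvec F G" using x by (auto simp: blow_up_def)
  qed
  have "\<forall>\<^sub>F n in sequentially. ball z (e / 2) \<subseteq> subgraph_polytope F n"
    using close eventually_ge_at_top[of n0]
  proof eventually_elim
    case (elim n)
    have B: "ball z (2 * (e / 2)) \<subseteq> convex hull (hom_vector False F w ` induced_index F)"
      using e(2) by simp
    have "ball z (e / 2) \<subseteq> convex hull (v n ` induced_index F)"
      by (rule ball_subset_convex_hull_perturbed[OF finite_induced_index _ B])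
        (use elim(1) e(1) in auto)
    thus ?case using hull[OF elim(2)] by blast
  qed
  thus ?thesis using e(1) half_gt_zero by blast
qed

lemma uniform_positive_lower_bound:
  fixes f :: "nat \<Rightarrow> real"
  assumes pos: "\<And>n. n \<ge> n0 \<Longrightarrow> f n > 0"
    and eventually: "\<forall>\<^sub>F n in sequentially. f n \<ge> \<mu>" and \<mu>: "\<mu> > 0"
  shows "\<exists>V > 0. \<forall>n \<ge> n0. f n > V"
proof -
  obtain N where N: "\<And>n. n \<ge> N \<Longrightarrow> f n \<ge> \<mu>" using eventually by (auto simp: eventually_sequentially)
  define M where "M = Min (insert \<mu> (f ` {n0..<N}))"
  have "M > 0" unfolding M_def using \<mu> pos by (subst Min_gr_iff) auto
  moreover have "f n \<ge> M" if "n \<ge> n0" for n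
  proof (cases "n < N")
    case True thus ?thesis unfolding M_def using that by (intro Min_le) auto
  next
    case False
    have "M \<le> \<mu>" unfolding M_def by (intro Min_le) auto
    thus ?thesis using N[of n] False by simp
  qed
  ultimately have "\<forall>n \<ge> n0. f n > M / 2" by fastforce
  thus ?thesis using \<open>M > 0\<close> half_gt_zero by blast
qed

theorem corollary4p7:
  fixes F :: "'d::finite \<Rightarrow> graph" and n0 :: nat
  assumes graphs: "\<And>i. simple_graph (F i)"
    and nonempty: "\<And>i. fst (F i) \<ge> 1"
    and noiso: "\<And>i. no_isolated (F i)"
    and distinct: "\<And>i j. i \<noteq> j \<Longrightarrow> \<not> graph_iso (F i) (F j)"
    and n0: "\<And>i. fst (F i) \<le> n0"
  shows "\<exists>V > 0. \<forall>n \<ge> n0. measure lborel (subgraph_polytope F n) > V"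
proof -
  have pos: "measure lborel (subgraph_polytope F n) > 0" if "n \<ge> n0" for n
    by (rule subgraph_polytope_measure_pos[OF graphs nonempty noiso distinct le_trans[OF n0 that]])
  obtain z r where r: "r > 0" and ball: "\<forall>\<^sub>F n in sequentially. ball z r \<subseteq> subgraph_polytope F n"
    using subgraph_polytope_eventually_contains_ball[of F n0, OF graphs nonempty noiso distinct n0]
    by blast
  have "\<forall>\<^sub>F n in sequentially. measure lborel (ball z r) \<le> measure lborel (subgraph_polytope F n)"
    using ball by eventually_elim (rule measure_ball_le_compact[OF _ compact_subgraph_polytope])
  moreover have "measure lborel (ball z r) > 0" using content_ball_pos[OF r] by simp
  ultimately show ?thesis
    using uniform_positive_lower_bound[of n0 "\<lambda>n. measure lborel (subgraph_polytope F n)"] pos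
    by blast
qed

end
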